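(* Let $\xi$ be the distribution defined below. Then $\widehat\xi(1)<\infty$ and $\widehat\xi(1+i)=0$.
   Context: Define on $[0,\infty)$ the functions $\phi_1(x)=e^{-x}\big(3\pi+1+\sqrt2\sin(x-\tfrac{\pi}{4})\big)$ and $\phi_2(x)=\frac{1}{3\pi}1_{[0,2\pi)}(x)+\sum_{n=1}^\infty\frac{1}{\pi^3n^2}1_{[2n\pi,2(n+1)\pi)}(x)$. Both are positive, right-continuous and decreasing on $[0,\infty)$, with $\phi_1(0)\phi_2(0)=1$. Let $\xi$ be the probability distribution on $[0,\infty)$ whose tail is $\bar\xi(x):=\xi((x,\infty))=\phi_1(x)\phi_2(x)$ for $x\ge0$. For a distribution $\rho$, $\widehat\rho(w):=\int e^{wx}\rho(dx)$ for complex $w$ whenever the integral converges absolutely. *)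

theory Defs
  imports "HOL-Probability.Probability"
begin

definition phi1 :: "real \<Rightarrow> real" where
  "phi1 x = exp (- x) * (3 * pi + 1 + sqrt 2 * sin (x - pi / 4))"

definition phi2 :: "real \<Rightarrow> real" where
  "phi2 x = 1 / (3 * pi) * indicator {0..<2 * pi} x
     + (\<Sum>n. 1 / (pi ^ 3 * real (Suc n) ^ 2)
              * indicator {2 * real (Suc n) * pi ..< 2 * (real (Suc n) + 1) * pi} x)"

text \<open>Tail of the distribution xi on [0,infinity).\<close>
definition xi_tail :: "real \<Rightarrow> real" where
  "xi_tail x = phi1 x * phi2 x"

end

theory Submission
  imports Defs
begin

(*
  For a distribution on [0, oo) and G with G' = g, E G(X) = G(0) + int_0^oo g(t) P(X > t) dt.
  With g(t) = e^t p(t) the integrand becomes p(t) w(t) phi2(t), where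
  w(t) = e^t phi1(t) = 3 pi + 1 + sin t - cos t. If p w has an antiderivative whose increment K
  over each period [2 n pi, 2 (n + 1) pi) is the same, the step function phi2 turns the integral
  into K (1/(3 pi) + sum_n 1/(pi^3 n^2)) = K/(2 pi). For G = e^x cos x one finds K = -2 pi and for
  G = e^x sin x one finds K = 0, so both expectations vanish, and these are the real and
  imaginary parts of the transform of xi at 1 + i.
*)

lemma has_bochner_integral_FTC_Ico_real:
  fixes f F :: "real \<Rightarrow> real"
  assumes "a \<le> b"
    and deriv: "\<And>x. a \<le> x \<Longrightarrow> x \<le> b \<Longrightarrow> (F has_real_derivative f x) (at x)"
    and cont: "\<And>x. a \<le> x \<Longrightarrow> x \<le> b \<Longrightarrow> isCont f x"
  shows "has_bochner_integral lborel (\<lambda>x. f x * indicator {a..<b} x) (F b - F a)"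
proof -
  have Icc: "has_bochner_integral lborel (\<lambda>x. f x * indicator {a..b} x) (F b - F a)"
    by (rule has_bochner_integral_FTC_Icc_real) (use assms in auto)
  have "(\<lambda>x. f x * indicator {a..<b} x) = (\<lambda>x. f x * indicator {a..b} x * indicator {a..<b} x)"
    by (auto simp: fun_eq_iff indicator_def)
  then have measurable: "(\<lambda>x. f x * indicator {a..<b} x) \<in> borel_measurable lborel"
    using borel_measurable_has_bochner_integral[OF Icc] by simp
  have "AE x in lborel. f x * indicator {a..b} x = f x * indicator {a..<b} x"
    using AE_lborel_singleton[of b] by eventually_elim (auto simp: indicator_def)
  with Icc measurable borel_measurable_has_bochner_integral[OF Icc] show ?thesis
    by (subst (asm) has_bochner_integral_cong_AE) auto
qed

lemma has_bochner_integral_mult_indicator_Ico_upper: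
  fixes M :: "real measure"
  assumes "finite_measure M" and "sets M = sets borel"
  shows "has_bochner_integral M (\<lambda>x. c * indicator {0..<x} t) (c * measure M {t<..} * indicator {0..} t)"
proof -
  interpret finite_measure M by fact
  have "(\<lambda>x. c * indicator {0..<x} t) = (\<lambda>x. (c * indicator {0..} t) * indicator {t<..} x)"
    by (auto simp: fun_eq_iff indicator_def)
  moreover have "integrable M (\<lambda>x. (c * indicator {0..} t) * indicator {t<..} x :: real)"
    using assms(2) by (intro integrable_mult_right integrable_real_indicator) (auto simp: emeasure_eq_measure)
  ultimately show ?thesis
    using assms(2) by (simp add: has_bochner_integral_iff)
qed

lemma integrable_tail_kernel:
  fixes M :: "real measure" and h :: "real \<Rightarrow> real"
  assumes "finite_measure M" and sets_M: "sets M = sets borel"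
    and [measurable]: "h \<in> borel_measurable borel"
    and tail_integrable: "integrable lborel (\<lambda>t. h t * measure M {t<..} * indicator {0..} t)"
  shows "integrable (lborel \<Otimes>\<^sub>M M) (\<lambda>(t, x). h t * indicator {0..<x} t)"
proof -
  interpret finite_measure M by fact
  interpret pair_sigma_finite lborel M
    by (simp add: pair_sigma_finite_def lborel.sigma_finite_measure_axioms sigma_finite_measure_axioms)
  note slice = has_bochner_integral_mult_indicator_Ico_upper[OF finite_measure_axioms sets_M]
  note sets_M[measurable_cong]
  show ?thesis
  proof (rule Fubini_integrable)
    show "(\<lambda>(t, x). h t * indicator {0..<x} t) \<in> borel_measurable (lborel \<Otimes>\<^sub>M M)"
      unfolding indicator_def atLeastLessThan_iff by measurable
    have "(\<integral>x. norm (h t * indicator {0..<x} t) \<partial>M)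
        = \<bar>h t * measure M {t<..} * indicator {0..} t\<bar>" for t
      using slice[of "\<bar>h t\<bar>" t] by (simp add: has_bochner_integral_iff abs_mult)
    then show "integrable lborel
        (\<lambda>t. \<integral>x. norm ((\<lambda>(t, x). h t * indicator {0..<x} t) (t, x)) \<partial>M)"
      using integrable_abs[OF tail_integrable] by simp
    show "AE t in lborel. integrable M (\<lambda>x. (\<lambda>(t, x). h t * indicator {0..<x} t) (t, x))"
      using slice by (auto simp: has_bochner_integral_iff)
  qed
qed

lemma expectation_eq_tail_integral:
  fixes M :: "real measure" and G h :: "real \<Rightarrow> real"
  assumes "prob_space M" and sets_M: "sets M = sets borel" and nonneg: "AE x in M. 0 \<le> x"
    and G: "\<And>t. (G has_real_derivative h t) (at t)" and h: "\<And>t. isCont h t"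
    and tail_integrable: "integrable lborel (\<lambda>t. h t * measure M {t<..} * indicator {0..} t)"
  shows "integrable M G
    \<and> integral\<^sup>L M G = G 0 + (\<integral>t. h t * measure M {t<..} * indicator {0..} t \<partial>lborel)"
proof -
  interpret prob_space M by fact
  interpret pair_sigma_finite lborel M
    by (simp add: pair_sigma_finite_def lborel.sigma_finite_measure_axioms
        prob_space_imp_sigma_finite \<open>prob_space M\<close>)
  have h_measurable: "h \<in> borel_measurable borel"
    using h by (intro borel_measurable_continuous_onI continuous_at_imp_continuous_on) simp
  have [measurable]: "G \<in> borel_measurable borel"
    using G DERIV_isCont by (intro borel_measurable_continuous_onI continuous_at_imp_continuous_on) blast
  note sets_M[measurable_cong]
  define F where "F t x = h t * indicator {0..<x} t" for t x :: real
  have "integrable (lborel \<Otimes>\<^sub>M M) (\<lambda>(t, x). F t x)"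
    unfolding F_def
    by (rule integrable_tail_kernel[OF finite_measure_axioms sets_M h_measurable tail_integrable])
  then have Fubini: "(\<integral>x. (\<integral>t. F t x \<partial>lborel) \<partial>M) = (\<integral>t. (\<integral>x. F t x \<partial>M) \<partial>lborel)"
    and integrable_inner: "integrable M (\<lambda>x. \<integral>t. F t x \<partial>lborel)"
    by (simp_all add: Fubini_integral integrable_snd)
  have FTC: "AE x in M. (\<integral>t. F t x \<partial>lborel) = G x - G 0"
    using nonneg
  proof eventually_elim
    case (elim x)
    then show ?case
      using has_bochner_integral_FTC_Ico_real[of 0 x G h] G h
      by (simp add: F_def has_bochner_integral_iff)
  qed
  have integrable_G: "integrable M (\<lambda>x. G x - G 0)"
    by (rule integrable_cong_AE_imp[OF integrable_inner _ FTC]) measurable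
  then have "integrable M G"
    using Bochner_Integration.integrable_add[OF integrable_G integrable_const[of "G 0"]] by simp
  have "integral\<^sup>L M G = G 0 + (\<integral>x. G x - G 0 \<partial>M)"
    using \<open>integrable M G\<close> by (simp add: prob_space)
  also have "(\<integral>x. G x - G 0 \<partial>M) = (\<integral>x. (\<integral>t. F t x \<partial>lborel) \<partial>M)"
    using FTC borel_measurable_integrable[OF integrable_inner]
    by (intro integral_cong_AE) (auto elim: AE_symmetric)
  also have "\<dots> = (\<integral>t. h t * measure M {t<..} * indicator {0..} t \<partial>lborel)"
    using Fubini has_bochner_integral_mult_indicator_Ico_upper[OF finite_measure_axioms sets_M]
    by (simp only: F_def has_bochner_integral_iff)
  finally show ?thesis
    using \<open>integrable M G\<close> by simp
qed

lemma has_bochner_integral_weighted_indicator_series: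
  fixes d :: "nat \<Rightarrow> real" and q :: "real \<Rightarrow> real" and J :: "nat \<Rightarrow> real set"
  assumes d_nonneg: "\<And>n. 0 \<le> d n" and d_sums: "d sums S"
    and piece: "\<And>n. has_bochner_integral lborel (\<lambda>t. q t * indicator (J n) t) K"
    and piece_abs: "\<And>n. (\<integral>t. \<bar>q t * indicator (J n) t\<bar> \<partial>lborel) \<le> C"
  shows "has_bochner_integral lborel (\<lambda>t. q t * (\<Sum>n. d n * indicator (J n) t)) (S * K)"
proof -
  define f where "f n t = d n * (q t * indicator (J n) t)" for n t
  have summable_d_mult: "summable (\<lambda>n. d n * c)" for c
    using d_sums by (intro summable_mult2) (simp add: sums_iff)
  have integrable_f: "integrable lborel (f n)" for n
    using piece[of n] unfolding f_def has_bochner_integral_iff by simp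
  have summable_pointwise: "AE t in lborel. summable (\<lambda>n. norm (f n t))"
  proof (rule AE_I2)
    fix t
    show "summable (\<lambda>n. norm (f n t))"
      by (rule summable_comparison_test'[OF summable_d_mult[of "\<bar>q t\<bar>"], of 0])
        (simp add: f_def abs_mult d_nonneg mult_left_mono indicator_def)
  qed
  have summable_norms: "summable (\<lambda>n. \<integral>t. norm (f n t) \<partial>lborel)"
    by (rule summable_comparison_test'[OF summable_d_mult[of C], of 0])
      (use mult_left_mono[OF piece_abs d_nonneg]
        in \<open>simp add: f_def abs_mult d_nonneg integral_nonneg_AE\<close>)
  have "(\<lambda>n. integral\<^sup>L lborel (f n)) sums (\<integral>t. (\<Sum>n. f n t) \<partial>lborel)"
    by (rule sums_integral[OF integrable_f summable_pointwise summable_norms])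
  moreover have "(\<lambda>n. integral\<^sup>L lborel (f n)) sums (S * K)"
    using sums_mult2[OF d_sums, of K] piece by (simp add: f_def[abs_def] has_bochner_integral_iff)
  ultimately have "(\<integral>t. (\<Sum>n. f n t) \<partial>lborel) = S * K"
    by (rule sums_unique2)
  moreover have "q t * (\<Sum>n. d n * indicator (J n) t) = (\<Sum>n. f n t)" for t
  proof -
    have "summable (\<lambda>n. d n * indicator (J n) t)"
      by (rule summable_comparison_test'[OF summable_d_mult[of 1], of 0])
        (simp add: d_nonneg indicator_def)
    then show ?thesis
      using suminf_mult[of "\<lambda>n. d n * indicator (J n) t" "q t"] by (simp add: f_def ac_simps)
  qed
  ultimately show ?thesis
    using integrable_suminf[OF integrable_f summable_pointwise summable_norms]
    by (simp add: has_bochner_integral_iff)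
qed

lemma inverse_pi_cube_squares_sums: "(\<lambda>n. 1 / (pi ^ 3 * real (Suc n) ^ 2)) sums (1 / (6 * pi))"
proof -
  have "(\<lambda>n. 1 / pi ^ 3 * (1 / real ((n + 1)\<^sup>2))) sums (1 / pi ^ 3 * (pi\<^sup>2 / 6))"
    by (rule sums_mult[OF inverse_squares_sums])
  moreover have "1 / pi ^ 3 * (pi\<^sup>2 / 6) = 1 / (6 * pi)"
    by (simp add: field_simps power2_eq_square power3_eq_cube)
  ultimately show ?thesis by simp
qed

lemma has_bochner_integral_mult_phi2:
  fixes q Q :: "real \<Rightarrow> real"
  assumes Q: "\<And>t. (Q has_real_derivative q t) (at t)" and q: "\<And>t. isCont q t"
    and bounded: "\<And>t. \<bar>q t\<bar> \<le> B"
    and period_increment: "\<And>n::nat. Q (2 * (real n + 1) * pi) - Q (2 * real n * pi) = K"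
  shows "has_bochner_integral lborel (\<lambda>t. q t * phi2 t) (K / (2 * pi))"
proof -
  define P where "P n = {2 * real n * pi ..< 2 * (real n + 1) * pi}" for n
  have period: "has_bochner_integral lborel (\<lambda>t. q t * indicator (P n) t) K" for n
    using has_bochner_integral_FTC_Ico_real[of "2 * real n * pi" "2 * (real n + 1) * pi" Q q] Q q
    unfolding P_def period_increment by simp
  have period_abs: "(\<integral>t. \<bar>q t * indicator (P n) t\<bar> \<partial>lborel) \<le> B * (2 * pi)" for n
  proof -
    have "(\<integral>t. \<bar>q t * indicator (P n) t\<bar> \<partial>lborel) \<le> (\<integral>t. B * indicator (P n) t \<partial>lborel)"
      using period[of n] bounded
      by (intro integral_mono integrable_abs integrable_mult_right integrable_real_indicator)
        (auto simp: has_bochner_integral_iff P_def indicator_def abs_mult)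
    also have "\<dots> = B * (2 * pi)"
      by (simp add: P_def algebra_simps)
    finally show ?thesis .
  qed
  have "has_bochner_integral lborel
      (\<lambda>t. q t * (\<Sum>n. 1 / (pi ^ 3 * real (Suc n) ^ 2) * indicator (P (Suc n)) t)) (1 / (6 * pi) * K)"
    by (rule has_bochner_integral_weighted_indicator_series[OF _ inverse_pi_cube_squares_sums
          period period_abs]) simp
  moreover have
    "has_bochner_integral lborel (\<lambda>t. 1 / (3 * pi) * (q t * indicator (P 0) t)) (1 / (3 * pi) * K)"
    by (intro has_bochner_integral_mult_right period)
  ultimately have "has_bochner_integral lborel (\<lambda>t. 1 / (3 * pi) * (q t * indicator (P 0) t)
      + q t * (\<Sum>n. 1 / (pi ^ 3 * real (Suc n) ^ 2) * indicator (P (Suc n)) t)) (K / (2 * pi))"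
    using has_bochner_integral_add by fastforce
  then show ?thesis
    by (simp add: phi2_def P_def algebra_simps)
qed

lemma phi2_eq_0_if_neg: "t < 0 \<Longrightarrow> phi2 t = 0"
proof -
  assume "t < 0"
  moreover have "0 < 2 * real (Suc n) * pi" for n
    by simp
  ultimately have "\<not> 2 * real (Suc n) * pi \<le> t" for n
    by (meson less_trans not_le)
  with \<open>t < 0\<close> show ?thesis
    by (simp add: phi2_def indicator_def)
qed

lemma exp_mult_xi_tail: "exp t * xi_tail t = (3 * pi + 1 + sin t - cos t) * phi2 t"
proof -
  have "sqrt 2 * sin (t - pi / 4) = sin t - cos t"
    by (simp add: sin_diff sin_45 cos_45 algebra_simps)
  moreover have "exp t * exp (- t) = 1"
    by (simp add: exp_minus)
  ultimately show ?thesis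
    unfolding xi_tail_def phi1_def by (metis (no_types, lifting) add_diff_eq mult.assoc mult_1)
qed

lemma abs_xi_weight_le: "\<bar>3 * pi + 1 + sin t - cos t\<bar> \<le> 3 * pi + 3"
  using sin_le_one[of t] cos_le_one[of t] sin_ge_minus_one[of t] cos_ge_minus_one[of t] pi_gt3
  by (intro abs_leI) linarith+

locale xi_distribution = prob_space M for M :: "real measure" +
  assumes sets_eq_borel: "sets M = sets borel"
    and emeasure_negative: "emeasure M {..<0} = 0"
    and tail_eq_xi_tail: "\<And>x. x \<ge> 0 \<Longrightarrow> measure M {x<..} = xi_tail x"
begin

lemma expectation_by_period_increment:
  fixes G p Q :: "real \<Rightarrow> real"
  assumes G: "\<And>t. (G has_real_derivative exp t * p t) (at t)" and p: "\<And>t. isCont p t"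
    and bounded: "\<And>t. \<bar>p t\<bar> \<le> B"
    and Q: "\<And>t. (Q has_real_derivative p t * (3 * pi + 1 + sin t - cos t)) (at t)"
    and period_increment: "\<And>n::nat. Q (2 * (real n + 1) * pi) - Q (2 * real n * pi) = K"
  shows "integrable M G \<and> expectation G = G 0 + K / (2 * pi)"
proof -
  have "\<bar>p t * (3 * pi + 1 + sin t - cos t)\<bar> \<le> B * (3 * pi + 3)" for t
    unfolding abs_mult
    using bounded[of t] abs_xi_weight_le[of t] order_trans[OF abs_ge_zero bounded]
    by (intro mult_mono) auto
  then have phi2_integral:
    "has_bochner_integral lborel (\<lambda>t. p t * (3 * pi + 1 + sin t - cos t) * phi2 t) (K / (2 * pi))"
    using p by (intro has_bochner_integral_mult_phi2[OF Q _ _ period_increment])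
      (auto intro!: continuous_intros)
  have tail_density: "(\<lambda>t. exp t * p t * measure M {t<..} * indicator {0..} t)
      = (\<lambda>t. p t * (3 * pi + 1 + sin t - cos t) * phi2 t)"
  proof
    fix t
    show "exp t * p t * measure M {t<..} * indicator {0..} t
        = p t * (3 * pi + 1 + sin t - cos t) * phi2 t"
      using exp_mult_xi_tail[of t]
      by (cases "0 \<le> t") (simp_all add: tail_eq_xi_tail phi2_eq_0_if_neg ac_simps)
  qed
  have "AE x in M. 0 \<le> x"
    by (rule AE_I[of _ _ "{..<0}"]) (auto simp: emeasure_negative sets_eq_borel)
  then have "integrable M G
      \<and> expectation G = G 0 + (\<integral>t. exp t * p t * measure M {t<..} * indicator {0..} t \<partial>lborel)"
    by (rule expectation_eq_tail_integral[OF prob_space_axioms sets_eq_borel _ G])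
      (use phi2_integral p
        in \<open>auto simp: tail_density has_bochner_integral_iff intro!: continuous_intros\<close>)
  then show ?thesis
    using phi2_integral by (simp add: tail_density has_bochner_integral_iff)
qed

lemma integrable_exp: "integrable M exp"
proof -
  have "integrable M exp \<and> expectation exp = exp 0 + (3 * pi + 1) * (2 * pi) / (2 * pi)"
  proof (rule expectation_by_period_increment[where p = "\<lambda>_. 1" and B = 1
        and Q = "\<lambda>t. (3 * pi + 1) * t - cos t - sin t"])
    show "((\<lambda>t. (3 * pi + 1) * t - cos t - sin t) has_real_derivative 1 * (3 * pi + 1 + sin t - cos t)) (at t)"
      for t
      by (auto intro!: derivative_eq_intros)
    show "(3 * pi + 1) * (2 * (real n + 1) * pi) - cos (2 * (real n + 1) * pi) - sin (2 * (real n + 1) * pi)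
      - ((3 * pi + 1) * (2 * real n * pi) - cos (2 * real n * pi) - sin (2 * real n * pi))
      = (3 * pi + 1) * (2 * pi)" for n
      using sin_2npi[of n] cos_2npi[of n] sin_2npi[of "Suc n"] cos_2npi[of "Suc n"]
      by (simp add: algebra_simps)
  qed (auto intro!: derivative_eq_intros)
  then show ?thesis ..
qed

lemma integral_exp_mult_cos: "integrable M (\<lambda>x. exp x * cos x) \<and> expectation (\<lambda>x. exp x * cos x) = 0"
proof -
  have "integrable M (\<lambda>x. exp x * cos x)
      \<and> expectation (\<lambda>x. exp x * cos x) = exp 0 * cos 0 + (- 2 * pi) / (2 * pi)"
  proof (rule expectation_by_period_increment[where p = "\<lambda>t. cos t - sin t" and B = 2
        and Q = "\<lambda>t. (3 * pi + 1) * (sin t + cos t) - t + sin t ^ 2"])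
    fix t
    have "(cos t - sin t) * (3 * pi + 1 + sin t - cos t)
        = (3 * pi + 1) * (cos t - sin t) - 1 + 2 * sin t * cos t"
      using sin_cos_squared_add[of t] by (simp add: algebra_simps power2_eq_square)
    then show "((\<lambda>t. (3 * pi + 1) * (sin t + cos t) - t + sin t ^ 2)
        has_real_derivative (cos t - sin t) * (3 * pi + 1 + sin t - cos t)) (at t)"
      by (auto intro!: derivative_eq_intros simp: algebra_simps)
    show "\<bar>cos t - sin t\<bar> \<le> 2"
      using abs_sin_le_one[of t] abs_cos_le_one[of t] by linarith
  next
    fix n :: nat
    show "(3 * pi + 1) * (sin (2 * (real n + 1) * pi) + cos (2 * (real n + 1) * pi))
        - 2 * (real n + 1) * pi + sin (2 * (real n + 1) * pi) ^ 2
      - ((3 * pi + 1) * (sin (2 * real n * pi) + cos (2 * real n * pi))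
        - 2 * real n * pi + sin (2 * real n * pi) ^ 2) = - 2 * pi"
      using sin_2npi[of n] cos_2npi[of n] sin_2npi[of "Suc n"] cos_2npi[of "Suc n"]
      by (simp add: algebra_simps)
  qed (auto intro!: derivative_eq_intros continuous_intros simp: algebra_simps)
  then show ?thesis
    by simp
qed

lemma integral_exp_mult_sin: "integrable M (\<lambda>x. exp x * sin x) \<and> expectation (\<lambda>x. exp x * sin x) = 0"
proof -
  have "integrable M (\<lambda>x. exp x * sin x)
      \<and> expectation (\<lambda>x. exp x * sin x) = exp 0 * sin 0 + 0 / (2 * pi)"
  proof (rule expectation_by_period_increment[where p = "\<lambda>t. sin t + cos t" and B = 2
        and Q = "\<lambda>t. (3 * pi + 1) * (sin t - cos t) - sin t * cos t"])
    fix t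
    have "(sin t + cos t) * (3 * pi + 1 + sin t - cos t)
        = (3 * pi + 1) * (cos t + sin t) - (cos t * cos t + - sin t * sin t)"
      by (simp add: algebra_simps)
    then show "((\<lambda>t. (3 * pi + 1) * (sin t - cos t) - sin t * cos t)
        has_real_derivative (sin t + cos t) * (3 * pi + 1 + sin t - cos t)) (at t)"
      by (auto intro!: derivative_eq_intros simp: algebra_simps)
    show "\<bar>sin t + cos t\<bar> \<le> 2"
      using abs_sin_le_one[of t] abs_cos_le_one[of t] by linarith
  next
    fix n :: nat
    show "(3 * pi + 1) * (sin (2 * (real n + 1) * pi) - cos (2 * (real n + 1) * pi))
        - sin (2 * (real n + 1) * pi) * cos (2 * (real n + 1) * pi)
      - ((3 * pi + 1) * (sin (2 * real n * pi) - cos (2 * real n * pi))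
        - sin (2 * real n * pi) * cos (2 * real n * pi)) = 0"
      using sin_2npi[of n] cos_2npi[of n] sin_2npi[of "Suc n"] cos_2npi[of "Suc n"]
      by (simp add: algebra_simps)
  qed (auto intro!: derivative_eq_intros continuous_intros simp: algebra_simps)
  then show ?thesis
    by simp
qed

end

lemma integral_exp_one_plus_i:
  fixes M :: "real measure"
  assumes "integrable M (\<lambda>x. exp x * cos x)" and "integrable M (\<lambda>x. exp x * sin x)"
  shows "integrable M (\<lambda>x. exp ((1 + \<i>) * complex_of_real x))
    \<and> (\<integral>x. exp ((1 + \<i>) * complex_of_real x) \<partial>M)
      = Complex (\<integral>x. exp x * cos x \<partial>M) (\<integral>x. exp x * sin x \<partial>M)"
proof -
  have exp_eq: "exp ((1 + \<i>) * complex_of_real x)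
      = complex_of_real (exp x * cos x) + \<i> * complex_of_real (exp x * sin x)" for x
    by (simp add: complex_eq_iff Re_exp Im_exp)
  have cos: "integrable M (\<lambda>x. complex_of_real (exp x * cos x))"
    using assms(1) by (subst complex_of_real_integrable_eq)
  have sin: "integrable M (\<lambda>x. \<i> * complex_of_real (exp x * sin x))"
    using assms(2) by (intro integrable_mult_right) (subst complex_of_real_integrable_eq)
  show ?thesis
    unfolding exp_eq Complex_eq Bochner_Integration.integral_add[OF cos sin]
    by (simp only: Bochner_Integration.integrable_add[OF cos sin] integral_mult_right_zero
        integral_complex_of_real simp_thms)
qed

theorem lemma3p1:
  fixes M :: "real measure"
  assumes "prob_space M"
    and "sets M = sets borel"
    and "emeasure M {..<0} = 0"
    and "\<And>x. x \<ge> 0 \<Longrightarrow> measure M {x<..} = xi_tail x"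
  shows "(\<integral>\<^sup>+ x. ennreal (exp x) \<partial>M) < \<infinity>
    \<and> integrable M (\<lambda>x. exp ((1 + \<i>) * complex_of_real x))
    \<and> (\<integral> x. exp ((1 + \<i>) * complex_of_real x) \<partial>M) = 0"
proof -
  interpret xi_distribution M
    using assms by (intro xi_distribution.intro xi_distribution_axioms.intro) auto
  have "(\<integral>\<^sup>+ x. ennreal (exp x) \<partial>M) < \<infinity>"
    using integrable_exp by (simp add: integrable_iff_bounded)
  moreover note integral_exp_mult_cos integral_exp_mult_sin
  ultimately show ?thesis
    using integral_exp_one_plus_i[of M] by (simp add: complex_eq_iff)
qed

end
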